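(* Let $G$ be a strategic game with players $1,\dots,n$ and $\phi=(\phi_1,\dots,\phi_n)$ with each $\phi_i$ a positive optimality condition for player $i$. Then for every belief model $(\Omega,\bar s_1,\dots,\bar s_n,P_1,\dots,P_n)$ for $G$, $$[\![\mathit{rat}_\phi]\!]\cap[\![\Box^*\mathit{rat}_\phi]\!]\subseteq[\![\nu X.\,O_\phi X]\!],$$ i.e. the formula $(\mathit{rat}_\phi\wedge\Box^*\mathit{rat}_\phi)\rightarrow\nu X.O_\phi X$ is valid.
   Context: Strategic game: $G=(T_1,\dots,T_n,<_1,\dots,<_n)$ with arbitrary nonempty strategy sets $T_i$ and $<_i$ a total linear order on $T=\prod_i T_i$; $\ge_i$ its reflexive closure. Notation $s_{-i}$, $(s_i,t_{-i})$ as usual. A restriction is $S=(S_1,\dots,S_n)$ with $S_i\subseteq T_i$. $\mathcal{L}_O$: first-order formulas from atoms $C(a)$, $a\ge^i_c b$ ($a,b,c$ variables or constant $o$) with $\neg,\wedge,\exists$. For an optimality model $(G,G',s)$ ($G'$ a restriction, $s\in T$) and assignment $\alpha$ (variables to $T$, $o\mapsto s$): $C(x)$ holds iff $\alpha(x)_j\in G'_j$ for all $j$; $x\ge^i_z y$ holds iff $(\alpha(x)_i,\alpha(z)_{-i})\ge_i(\alpha(y)_i,\alpha(z)_{-i})$. An optimality condition for $i$ is a closed $\mathcal{L}_O$-formula using only $\ge^i$; it is positive if every $C(\cdot)$ occurs under an even number of negations. Belief model: $(\Omega,\bar s_1,\dots,\bar s_n,P_1,\dots,P_n)$, $\Omega\ne\emptyset$,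 $\bar s_i:\Omega\to T_i$, $P_i:\Omega\to 2^\Omega$; $\bar s(\omega)=(\bar s_i(\omega))_i$; $(G_E)_i=\{\bar s_i(u):u\in E\}$ for $E\subseteq\Omega$. $\mathcal{L}_\nu$: $\psi::=\mathit{rat}_{\phi_i}\mid X\mid\psi\wedge\psi\mid\neg\psi\mid\Box_i\psi\mid O_{\phi_i}\psi\mid\nu X.\psi$ ($\nu$-free body). Semantics $[\![\psi]\!]_E\subseteq\Omega$ for $E\subseteq\Omega$: $[\![\mathit{rat}_{\phi_i}]\!]_E=\{\omega:(G,G_{P_i(\omega)},\bar s(\omega))\models\phi_i\}$; $[\![X]\!]_E=E$; $\wedge,\neg$ as intersection and complement; $[\![\Box_i\psi]\!]_E=\{\omega:P_i(\omega)\subseteq[\![\psi]\!]_E\}$; $[\![O_{\phi_i}\psi]\!]_E=\{\omega:(G,G_{[\![\psi]\!]_E},\bar s(\omega))\models\phi_i\}$; $[\![\nu X.\psi]\!]_E$ is the outcome of the operator $F\mapsto[\![\psi]\!]_F\cap F$ on $\mathcal P(\Omega)$. Here the outcome of an operator $O$ on a complete lattice with top $\top$ is $O^{\alpha}$ for the least ordinal $\alpha$ with $O^{\alpha+1}=O^\alpha$, where $O^0=\top$, $O^{\alpha+1}=O(O^\alpha)$, $O^\beta=\bigcap_{\alpha<\beta}O^\alpha$ for limit $\beta$. For formulas without free $X$ write $[\![\psi]\!]$. Abbreviations $\mathit{rat}_\phi=\bigwedge_i\mathit{rat}_{\phi_i}$, $\Box\psi=\bigwedge_i\Box_i\psi$,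 $O_\phi\psi=\bigwedge_iO_{\phi_i}\psi$, $\Box^*\psi:=\nu X.\Box(X\wedge\psi)$. A formula is valid if its interpretation is $\Omega$ in every belief model for $G$. *)

theory Defs
  imports Main "HOL-Library.FuncSet"
begin

text \<open>Players are 0,...,n-1. A strategy profile is an extensional function
  on {..<n} with values in the strategy sets T i. The reflexive order
  ge i (= \<ge>_i, reflexive closure of the total linear order <_i) is a linear
  order on the set of profiles.\<close>

definition profiles :: "nat \<Rightarrow> (nat \<Rightarrow> 'a set) \<Rightarrow> (nat \<Rightarrow> 'a) set" where
  "profiles n T = Pi\<^sub>E {..<n} T"

definition game :: "nat \<Rightarrow> (nat \<Rightarrow> 'a set) \<Rightarrow> (nat \<Rightarrow> (nat \<Rightarrow> 'a) \<Rightarrow> (nat \<Rightarrow> 'a) \<Rightarrow> bool) \<Rightarrow> bool" where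
  "game n T ge \<longleftrightarrow>
     (\<forall>i<n. T i \<noteq> {}) \<and>
     (\<forall>i<n. (\<forall>s\<in>profiles n T. ge i s s) \<and>
            (\<forall>s\<in>profiles n T. \<forall>t\<in>profiles n T. \<forall>u\<in>profiles n T. ge i s t \<longrightarrow> ge i t u \<longrightarrow> ge i s u) \<and>
            (\<forall>s\<in>profiles n T. \<forall>t\<in>profiles n T. ge i s t \<longrightarrow> ge i t s \<longrightarrow> s = t) \<and>
            (\<forall>s\<in>profiles n T. \<forall>t\<in>profiles n T. ge i s t \<or> ge i t s))"

datatype tm = TV nat | TO   \<comment> \<open>variables and the constant o\<close>

datatype ofm =
    C tm
  | Ge nat tm tm tm        \<comment> \<open>Ge i a c b  is  a \<ge>^i_c b\<close>
  | ONeg ofm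
  | OAnd ofm ofm
  | OEx nat ofm

fun tmv :: "(nat \<Rightarrow> (nat \<Rightarrow> 'a)) \<Rightarrow> (nat \<Rightarrow> 'a) \<Rightarrow> tm \<Rightarrow> (nat \<Rightarrow> 'a)" where
  "tmv \<alpha> s (TV x) = \<alpha> x"
| "tmv \<alpha> s TO = s"

text \<open>Satisfaction in the optimality model (G, S, s) under assignment \<alpha>.
  (x_i, z_{-i}) is z(i := x i).\<close>
fun osat :: "nat \<Rightarrow> (nat \<Rightarrow> 'a set) \<Rightarrow> (nat \<Rightarrow> (nat \<Rightarrow> 'a) \<Rightarrow> (nat \<Rightarrow> 'a) \<Rightarrow> bool)
   \<Rightarrow> (nat \<Rightarrow> 'a set) \<Rightarrow> (nat \<Rightarrow> 'a) \<Rightarrow> (nat \<Rightarrow> (nat \<Rightarrow> 'a)) \<Rightarrow> ofm \<Rightarrow> bool" where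
  "osat n T ge S s \<alpha> (C a) = (\<forall>j<n. tmv \<alpha> s a j \<in> S j)"
| "osat n T ge S s \<alpha> (Ge i a c b) =
     ge i ((tmv \<alpha> s c)(i := tmv \<alpha> s a i)) ((tmv \<alpha> s c)(i := tmv \<alpha> s b i))"
| "osat n T ge S s \<alpha> (ONeg \<phi>) = (\<not> osat n T ge S s \<alpha> \<phi>)"
| "osat n T ge S s \<alpha> (OAnd \<phi> \<psi>) = (osat n T ge S s \<alpha> \<phi> \<and> osat n T ge S s \<alpha> \<psi>)"
| "osat n T ge S s \<alpha> (OEx x \<phi>) = (\<exists>t\<in>profiles n T. osat n T ge S s (\<alpha>(x := t)) \<phi>)"

fun tfv :: "tm \<Rightarrow> nat set" where
  "tfv (TV x) = {x}"
| "tfv TO = {}"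

fun ofv :: "ofm \<Rightarrow> nat set" where
  "ofv (C a) = tfv a"
| "ofv (Ge i a c b) = tfv a \<union> tfv c \<union> tfv b"
| "ofv (ONeg \<phi>) = ofv \<phi>"
| "ofv (OAnd \<phi> \<psi>) = ofv \<phi> \<union> ofv \<psi>"
| "ofv (OEx x \<phi>) = ofv \<phi> - {x}"

fun only_player :: "nat \<Rightarrow> ofm \<Rightarrow> bool" where
  "only_player i (C a) = True"
| "only_player i (Ge j a c b) = (j = i)"
| "only_player i (ONeg \<phi>) = only_player i \<phi>"
| "only_player i (OAnd \<phi> \<psi>) = (only_player i \<phi> \<and> only_player i \<psi>)"
| "only_player i (OEx x \<phi>) = only_player i \<phi>"

fun pos_pol :: "bool \<Rightarrow> ofm \<Rightarrow> bool" where
  "pos_pol b (C a) = b"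
| "pos_pol b (Ge j a c c') = True"
| "pos_pol b (ONeg \<phi>) = pos_pol (\<not> b) \<phi>"
| "pos_pol b (OAnd \<phi> \<psi>) = (pos_pol b \<phi> \<and> pos_pol b \<psi>)"
| "pos_pol b (OEx x \<phi>) = pos_pol b \<phi>"

definition positive :: "ofm \<Rightarrow> bool" where
  "positive \<phi> = pos_pol True \<phi>"

definition optimality_condition :: "nat \<Rightarrow> ofm \<Rightarrow> bool" where
  "optimality_condition i \<phi> \<longleftrightarrow> ofv \<phi> = {} \<and> only_player i \<phi>"

text \<open>(G, S, s) |= \<phi> for a closed formula (the assignment is irrelevant;
  we use the one sending every variable to s, which lies in T).\<close>
definition opt_models :: "nat \<Rightarrow> (nat \<Rightarrow> 'a set) \<Rightarrow> (nat \<Rightarrow> (nat \<Rightarrow> 'a) \<Rightarrow> (nat \<Rightarrow> 'a) \<Rightarrow> bool)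
   \<Rightarrow> (nat \<Rightarrow> 'a set) \<Rightarrow> (nat \<Rightarrow> 'a) \<Rightarrow> ofm \<Rightarrow> bool" where
  "opt_models n T ge S s \<phi> = osat n T ge S s (\<lambda>_. s) \<phi>"

text \<open>sb \<omega> is the profile (\<bar>s_i(\<omega>))_i.\<close>
definition belief_model :: "nat \<Rightarrow> (nat \<Rightarrow> 'a set) \<Rightarrow> 'w set \<Rightarrow> ('w \<Rightarrow> (nat \<Rightarrow> 'a))
   \<Rightarrow> (nat \<Rightarrow> 'w \<Rightarrow> 'w set) \<Rightarrow> bool" where
  "belief_model n T \<Omega> sb P \<longleftrightarrow> \<Omega> \<noteq> {} \<and> (\<forall>\<omega>\<in>\<Omega>. sb \<omega> \<in> profiles n T) \<and>
     (\<forall>i<n. \<forall>\<omega>\<in>\<Omega>. P i \<omega> \<subseteq> \<Omega>)"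

definition GE :: "('w \<Rightarrow> (nat \<Rightarrow> 'a)) \<Rightarrow> 'w set \<Rightarrow> (nat \<Rightarrow> 'a set)" where
  "GE sb E = (\<lambda>i. (\<lambda>\<omega>. sb \<omega> i) ` E)"

text \<open>The transfinite iterates O^\<alpha> (O^0 = top, successor = O, limit =
  intersection) of the operator O on P(\<Omega>) form exactly the least family
  containing \<Omega>, closed under O and under intersections of nonempty
  subfamilies. For the operators used here (F \<mapsto> [\<psi>]_F \<inter> F, which are
  deflationary) this family is a descending chain and its intersection is the
  first stationary iterate, i.e. the outcome.\<close>
inductive_set iter_tower :: "'w set \<Rightarrow> ('w set \<Rightarrow> 'w set) \<Rightarrow> 'w set set"
  for \<Omega> :: "'w set" and Op :: "'w set \<Rightarrow> 'w set" where
  top: "\<Omega> \<in> iter_tower \<Omega> Op"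
| succ: "F \<in> iter_tower \<Omega> Op \<Longrightarrow> Op F \<in> iter_tower \<Omega> Op"
| lim: "(\<And>G. G \<in> S \<Longrightarrow> G \<in> iter_tower \<Omega> Op) \<Longrightarrow> S \<noteq> {} \<Longrightarrow> \<Inter> S \<in> iter_tower \<Omega> Op"

definition outcome :: "'w set \<Rightarrow> ('w set \<Rightarrow> 'w set) \<Rightarrow> 'w set" where
  "outcome \<Omega> Op = \<Inter> (iter_tower \<Omega> Op)"

datatype lnu =
    Rat nat ofm
  | X
  | And lnu lnu
  | Neg lnu
  | Box nat lnu
  | Opt nat ofm lnu
  | Nu lnu

fun nu_free :: "lnu \<Rightarrow> bool" where
  "nu_free (Rat i \<phi>) = True"
| "nu_free X = True"
| "nu_free (And a b) = (nu_free a \<and> nu_free b)"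
| "nu_free (Neg a) = nu_free a"
| "nu_free (Box i a) = nu_free a"
| "nu_free (Opt i \<phi> a) = nu_free a"
| "nu_free (Nu a) = False"

fun wf_lnu :: "lnu \<Rightarrow> bool" where
  "wf_lnu (Rat i \<phi>) = True"
| "wf_lnu X = True"
| "wf_lnu (And a b) = (wf_lnu a \<and> wf_lnu b)"
| "wf_lnu (Neg a) = wf_lnu a"
| "wf_lnu (Box i a) = wf_lnu a"
| "wf_lnu (Opt i \<phi> a) = wf_lnu a"
| "wf_lnu (Nu a) = nu_free a"

primrec sem :: "nat \<Rightarrow> (nat \<Rightarrow> 'a set) \<Rightarrow> (nat \<Rightarrow> (nat \<Rightarrow> 'a) \<Rightarrow> (nat \<Rightarrow> 'a) \<Rightarrow> bool)
   \<Rightarrow> 'w set \<Rightarrow> ('w \<Rightarrow> (nat \<Rightarrow> 'a)) \<Rightarrow> (nat \<Rightarrow> 'w \<Rightarrow> 'w set) \<Rightarrow> 'w set \<Rightarrow> lnu \<Rightarrow> 'w set" where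
  "sem n T ge \<Omega> sb P E (Rat i \<phi>) = {\<omega>\<in>\<Omega>. opt_models n T ge (GE sb (P i \<omega>)) (sb \<omega>) \<phi>}"
| "sem n T ge \<Omega> sb P E X = E"
| "sem n T ge \<Omega> sb P E (And a b) = sem n T ge \<Omega> sb P E a \<inter> sem n T ge \<Omega> sb P E b"
| "sem n T ge \<Omega> sb P E (Neg a) = \<Omega> - sem n T ge \<Omega> sb P E a"
| "sem n T ge \<Omega> sb P E (Box i a) = {\<omega>\<in>\<Omega>. P i \<omega> \<subseteq> sem n T ge \<Omega> sb P E a}"
| "sem n T ge \<Omega> sb P E (Opt i \<phi> a) =
     {\<omega>\<in>\<Omega>. opt_models n T ge (GE sb (sem n T ge \<Omega> sb P E a)) (sb \<omega>) \<phi>}"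
| "sem n T ge \<Omega> sb P E (Nu a) = outcome \<Omega> (\<lambda>F. sem n T ge \<Omega> sb P F a \<inter> F)"

fun bigAnd :: "lnu list \<Rightarrow> lnu" where
  "bigAnd [] = Neg (And X (Neg X))"
| "bigAnd [a] = a"
| "bigAnd (a # as) = And a (bigAnd as)"

definition rat_all :: "nat \<Rightarrow> (nat \<Rightarrow> ofm) \<Rightarrow> lnu" where
  "rat_all n \<phi> = bigAnd (map (\<lambda>i. Rat i (\<phi> i)) [0..<n])"

definition box_all :: "nat \<Rightarrow> lnu \<Rightarrow> lnu" where
  "box_all n \<psi> = bigAnd (map (\<lambda>i. Box i \<psi>) [0..<n])"

definition opt_all :: "nat \<Rightarrow> (nat \<Rightarrow> ofm) \<Rightarrow> lnu \<Rightarrow> lnu" where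
  "opt_all n \<phi> \<psi> = bigAnd (map (\<lambda>i. Opt i (\<phi> i) \<psi>) [0..<n])"

definition box_star :: "nat \<Rightarrow> lnu \<Rightarrow> lnu" where
  "box_star n \<psi> = Nu (box_all n (And X \<psi>))"

end

theory Submission
  imports Defs
begin

text \<open>Let \<open>Z = [rat\<^sub>\<phi>] \<inter> [\<box>*rat\<^sub>\<phi>]\<close>. Every world
  believed possible by a player at a world of \<open>[\<box>*rat\<^sub>\<phi>]\<close> lies again in \<open>Z\<close>. Hence, whenever
  \<open>Z \<subseteq> F\<close>, each player's beliefs at a world of \<open>Z\<close> are contained in \<open>F\<close>, and since
  the optimality conditions are positive (monotone in the restriction), rationality
  with respect to those beliefs gives optimality with respect to \<open>F\<close>, i.e. \<open>Z \<subseteq> [O\<^sub>\<phi>X]\<^sub>F\<close>.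
  So \<open>Z\<close> is contained in every iterate of the operator defining \<open>\<nu>X.O\<^sub>\<phi>X\<close>.\<close>

lemma sem_bigAnd:
  assumes "\<forall>x\<in>set xs. sem n T ge \<Omega> sb P E x \<subseteq> \<Omega>"
  shows "sem n T ge \<Omega> sb P E (bigAnd xs) = \<Omega> \<inter> (\<Inter>x\<in>set xs. sem n T ge \<Omega> sb P E x)"
  using assms by (induction xs rule: bigAnd.induct) auto

lemma sem_rat_all:
  "sem n T ge \<Omega> sb P E (rat_all n \<phi>) = \<Omega> \<inter> (\<Inter>i<n. sem n T ge \<Omega> sb P E (Rat i (\<phi> i)))"
  unfolding rat_all_def by (subst sem_bigAnd) auto

lemma sem_rat_all_indep:
  "sem n T ge \<Omega> sb P E (rat_all n \<phi>) = sem n T ge \<Omega> sb P E' (rat_all n \<phi>)"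
  unfolding sem_rat_all by simp

lemma sem_box_all:
  "sem n T ge \<Omega> sb P E (box_all n \<psi>) = \<Omega> \<inter> (\<Inter>i<n. sem n T ge \<Omega> sb P E (Box i \<psi>))"
  unfolding box_all_def by (subst sem_bigAnd) auto

lemma sem_opt_all:
  "sem n T ge \<Omega> sb P E (opt_all n \<phi> \<psi>) = \<Omega> \<inter> (\<Inter>i<n. sem n T ge \<Omega> sb P E (Opt i (\<phi> i) \<psi>))"
  unfolding opt_all_def by (subst sem_bigAnd) auto

lemma osat_mono_pos_pol:
  assumes "pos_pol b \<phi>" and "\<And>j. S j \<subseteq> S' j"
  shows "if b then osat n T ge S s \<alpha> \<phi> \<longrightarrow> osat n T ge S' s \<alpha> \<phi>
         else osat n T ge S' s \<alpha> \<phi> \<longrightarrow> osat n T ge S s \<alpha> \<phi>"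
  using assms(1)
proof (induction \<phi> arbitrary: b \<alpha>)
  case (C a)
  then show ?case using assms(2) by auto
next
  case (Ge i a c b')
  then show ?case by simp
next
  case (ONeg \<phi>)
  from ONeg.IH[of "\<not> b"] ONeg.prems show ?case by (auto split: if_splits)
next
  case (OAnd \<phi>1 \<phi>2)
  from OAnd.IH[of b] OAnd.prems show ?case by (auto split: if_splits)
next
  case (OEx x \<phi>)
  from OEx.IH[of b] OEx.prems show ?case by (cases b) (simp_all, meson+)
qed

lemma opt_models_mono_positive:
  assumes "positive \<phi>" and "\<And>j. S j \<subseteq> S' j" and "opt_models n T ge S s \<phi>"
  shows "opt_models n T ge S' s \<phi>"
  using osat_mono_pos_pol[of True \<phi> S S'] assms
  unfolding positive_def opt_models_def by auto

lemma GE_mono: "A \<subseteq> B \<Longrightarrow> GE sb A j \<subseteq> GE sb B j"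
  unfolding GE_def by auto

lemma outcome_in_iter_tower: "outcome \<Omega> Op \<in> iter_tower \<Omega> Op"
  unfolding outcome_def by (rule iter_tower.lim) (auto intro: iter_tower.top)

lemma outcome_subset_step: "outcome \<Omega> Op \<subseteq> Op (outcome \<Omega> Op)"
  using iter_tower.succ[OF outcome_in_iter_tower] unfolding outcome_def by blast

lemma subset_outcome:
  assumes "Z \<subseteq> \<Omega>" and "\<And>F. Z \<subseteq> F \<Longrightarrow> Z \<subseteq> Op F"
  shows "Z \<subseteq> outcome \<Omega> Op"
proof -
  have "Z \<subseteq> F" if "F \<in> iter_tower \<Omega> Op" for F
    using that by (induction rule: iter_tower.induct) (use assms in auto)
  then show ?thesis unfolding outcome_def by blast
qed

lemma box_star_rat_all_beliefs:
  assumes "\<omega> \<in> sem n T ge \<Omega> sb P E (box_star n (rat_all n \<phi>))" and "i < n"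
  shows "P i \<omega> \<subseteq> sem n T ge \<Omega> sb P E (rat_all n \<phi>) \<inter> sem n T ge \<Omega> sb P E (box_star n (rat_all n \<phi>))"
proof -
  let ?s = "sem n T ge \<Omega> sb P"
  let ?B = "?s E (box_star n (rat_all n \<phi>))"
  have "?B \<subseteq> ?s ?B (box_all n (And X (rat_all n \<phi>)))"
    using outcome_subset_step[of \<Omega> "\<lambda>F. ?s F (box_all n (And X (rat_all n \<phi>))) \<inter> F"]
    unfolding box_star_def by simp
  then have "\<omega> \<in> ?s ?B (Box i (And X (rat_all n \<phi>)))"
    using assms unfolding sem_box_all by blast
  then show ?thesis using sem_rat_all_indep[of n T ge \<Omega> sb P ?B \<phi> E] by auto
qed

lemma rat_all_box_star_subset_opt_all:
  assumes positive: "\<forall>i<n. positive (\<phi> i)"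
    and Z_def: "Z = sem n T ge \<Omega> sb P E (rat_all n \<phi>) \<inter> sem n T ge \<Omega> sb P E (box_star n (rat_all n \<phi>))"
    and "Z \<subseteq> F"
  shows "Z \<subseteq> sem n T ge \<Omega> sb P F (opt_all n \<phi> X)"
proof
  fix \<omega> assume "\<omega> \<in> Z"
  have \<omega>: "\<omega> \<in> \<Omega>" "\<And>i. i < n \<Longrightarrow> opt_models n T ge (GE sb (P i \<omega>)) (sb \<omega>) (\<phi> i)"
    using \<open>\<omega> \<in> Z\<close> unfolding Z_def sem_rat_all by auto
  have beliefs: "P i \<omega> \<subseteq> F" if "i < n" for i
  proof -
    have "\<omega> \<in> sem n T ge \<Omega> sb P E (box_star n (rat_all n \<phi>))"
      using \<open>\<omega> \<in> Z\<close> unfolding Z_def by blast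
    from box_star_rat_all_beliefs[OF this that] show ?thesis
      using \<open>Z \<subseteq> F\<close> unfolding Z_def by blast
  qed
  have "opt_models n T ge (GE sb F) (sb \<omega>) (\<phi> i)" if "i < n" for i
  proof (rule opt_models_mono_positive)
    show "positive (\<phi> i)" using positive that by blast
    show "GE sb (P i \<omega>) j \<subseteq> GE sb F j" for j using GE_mono[OF beliefs[OF that]] .
  qed (rule \<omega>(2)[OF that])
  then show "\<omega> \<in> sem n T ge \<Omega> sb P F (opt_all n \<phi> X)"
    unfolding sem_opt_all using \<omega>(1) by simp
qed

theorem mainTheorem2:
  fixes n :: nat and T :: "nat \<Rightarrow> 'a set"
    and ge :: "nat \<Rightarrow> (nat \<Rightarrow> 'a) \<Rightarrow> (nat \<Rightarrow> 'a) \<Rightarrow> bool"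
    and \<phi> :: "nat \<Rightarrow> ofm"
    and \<Omega> :: "'w set" and sb :: "'w \<Rightarrow> (nat \<Rightarrow> 'a)" and P :: "nat \<Rightarrow> 'w \<Rightarrow> 'w set"
  assumes "game n T ge"
    and "\<forall>i<n. optimality_condition i (\<phi> i) \<and> positive (\<phi> i)"
    and "belief_model n T \<Omega> sb P"
  shows "sem n T ge \<Omega> sb P \<Omega> (rat_all n \<phi>) \<inter> sem n T ge \<Omega> sb P \<Omega> (box_star n (rat_all n \<phi>))
           \<subseteq> sem n T ge \<Omega> sb P \<Omega> (Nu (opt_all n \<phi> X))"
proof -
  let ?Z = "sem n T ge \<Omega> sb P \<Omega> (rat_all n \<phi>) \<inter> sem n T ge \<Omega> sb P \<Omega> (box_star n (rat_all n \<phi>))"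
  have positive: "\<forall>i<n. positive (\<phi> i)" using assms(2) by blast
  have "?Z \<subseteq> \<Omega>" unfolding sem_rat_all by blast
  moreover have "?Z \<subseteq> sem n T ge \<Omega> sb P F (opt_all n \<phi> X) \<inter> F" if "?Z \<subseteq> F" for F
    using rat_all_box_star_subset_opt_all[OF positive refl that] that by blast
  ultimately show ?thesis by (simp add: subset_outcome)
qed

end
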